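(* Let $a\ge2$, $d\ge1$, $h\ge1$ and $s$ be integers with $\gcd(a,d)=1$ and $1\le s<a$. Let $\mathit{NR}$ be the set of positive integers not representable as $ax_0+\sum_{i=1}^s(ha+id)x_i$ with $x_0,\dots,x_s$ nonnegative integers, and let $S_m=\sum_{n\in\mathit{NR}}n^m$. Then for every integer $m\ge3$, \[ \begin{aligned} m(m-1)(m-2)S_{m-3}={}&m\sum_{j=0}^{m-1}\binom{m-1}{j}d^{m-j-2}B_{m-j-1}a^{j-1}\phi_j\!\left(h\lceil (a-1)/s\rceil+d\right)\\ &+\sum_{j=0}^{m}\sum_{i=0}^{j}\binom{m}{j}\binom{j}{i}a^{m-j-1}\phi_{m-j}(h)(-d)^{j-i-1}(ha+sd)^{i-1}B_{j-i}\,\phi_i\!\left(\lceil (a-1)/s\rceil\right)\\ &-m(m-1)B_{m-2}. \end{aligned} \]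
   Context: $B_m(x)$ denotes the Bernoulli polynomials, defined by $\frac{te^{tx}}{e^t-1}=\sum_{m\ge0}B_m(x)\frac{t^m}{m!}$; $B_m=B_m(0)$ are the Bernoulli numbers; $\phi_j(x)=B_j(x)-B_j$ (so $\phi_0=0$, and terms containing the factor $\phi_0$ are zero). $\lceil x\rceil$ is the least integer not less than $x$. *)

theory Defs
  imports "HOL-Analysis.Analysis" "HOL-Computational_Algebra.Formal_Power_Series"
begin

definition bernpoly :: "nat \<Rightarrow> real \<Rightarrow> real" where
  "bernpoly m x = fact m * fps_nth (fps_X * fps_exp x / (fps_exp 1 - 1)) m"

definition bernoulli :: "nat \<Rightarrow> real" where
  "bernoulli m = bernpoly m 0"

definition bphi :: "nat \<Rightarrow> real \<Rightarrow> real" where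
  "bphi j x = bernpoly j x - bernoulli j"

definition NR :: "nat \<Rightarrow> nat \<Rightarrow> nat \<Rightarrow> nat \<Rightarrow> nat set" where
  "NR a d h s = {n. 0 < n \<and> \<not> (\<exists>x0 (x :: nat \<Rightarrow> nat).
      n = a * x0 + (\<Sum>i=1..s. (h * a + i * d) * x i))}"

definition Spow :: "nat \<Rightarrow> nat \<Rightarrow> nat \<Rightarrow> nat \<Rightarrow> nat \<Rightarrow> real" where
  "Spow a d h s m = (\<Sum>n\<in>NR a d h s. real n ^ m)"

end

theory Submission
  imports Defs "HOL-Number_Theory.Cong"
begin

(* Let N = sum of e^(nX) over the non-representable n. The representable numbers are closed
   under adding a, and their Apery set with respect to a consists of the numbers
   ceil(t/s) h a + t d with t < a, so
     (e^(aX) - 1) N = sum_{t<a} e^((ceil(t/s) h a + t d) X) - sum_{r<a} e^(rX).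
   Grouping the first sum into blocks of s consecutive t gives it in closed form. Multiplying
   by X^3 and reading every X / (e^(cX) - 1) as the exponential generating function of
   c^(k-1) B_k turns X^3 N into a sum of products of such series; comparing the coefficients
   of X^m / m! gives the formula. *)

definition bernoulli_gf :: "real \<Rightarrow> real fps" where
  "bernoulli_gf c = fps_X / (fps_exp c - 1)"

lemma subdegree_fps_exp_minus_1: "c \<noteq> 0 \<Longrightarrow> subdegree (fps_exp c - 1 :: real fps) = 1"
  by (rule subdegreeI) auto

lemma fps_exp_minus_1_nonzero: "c \<noteq> 0 \<Longrightarrow> fps_exp c - 1 \<noteq> (0 :: real fps)"
  using subdegree_fps_exp_minus_1 by fastforce

lemma bernoulli_gf_times: "c \<noteq> 0 \<Longrightarrow> bernoulli_gf c * (fps_exp c - 1) = fps_X"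
  unfolding bernoulli_gf_def
  by (rule fps_times_divide_eq) (use fps_exp_minus_1_nonzero subdegree_fps_exp_minus_1 in auto)

lemma bernpoly_conv_bernoulli_gf: "bernpoly m x = fact m * fps_nth (fps_exp x * bernoulli_gf 1) m"
proof -
  have "fps_exp x * fps_X / (fps_exp 1 - 1) = fps_exp x * (fps_X / (fps_exp 1 - 1 :: real fps))"
    by (rule fps_divide_times) (use subdegree_fps_exp_minus_1[of 1] in auto)
  then show ?thesis
    by (simp add: bernpoly_def bernoulli_gf_def mult.commute)
qed

lemma bernoulli_conv_bernoulli_gf: "bernoulli m = fact m * fps_nth (bernoulli_gf 1) m"
  by (simp add: bernoulli_def bernpoly_conv_bernoulli_gf)

lemma bphi_conv_bernoulli_gf: "bphi m x = fact m * fps_nth ((fps_exp x - 1) * bernoulli_gf 1) m"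
  by (simp add: bphi_def bernpoly_conv_bernoulli_gf bernoulli_conv_bernoulli_gf algebra_simps)

lemma bernoulli_gf_uminus_times:
  assumes "c \<noteq> 0"
  shows "bernoulli_gf (- c) * (fps_exp c - 1) = - (fps_exp c * fps_X)"
proof -
  have "fps_exp c - 1 = - (fps_exp c * (fps_exp (- c) - 1))"
    by (simp add: algebra_simps fps_exp_add_mult[symmetric])
  then have "bernoulli_gf (- c) * (fps_exp c - 1) = - (fps_exp c * (bernoulli_gf (- c) * (fps_exp (- c) - 1)))"
    by (simp only: mult_minus_right mult.left_commute)
  with assms show ?thesis
    by (simp add: bernoulli_gf_times)
qed

lemma bernoulli_gf_compose_linear:
  assumes "c \<noteq> 0"
  shows "bernoulli_gf 1 oo (fps_const c * fps_X) = fps_const c * bernoulli_gf c"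
proof -
  have "(bernoulli_gf 1 oo (fps_const c * fps_X)) * (fps_exp c - 1)
      = (bernoulli_gf 1 * (fps_exp 1 - 1)) oo (fps_const c * fps_X)"
    by (simp add: fps_compose_mult_distrib fps_compose_sub_distrib)
  also have "\<dots> = (fps_const c * bernoulli_gf c) * (fps_exp c - 1)"
    using assms by (simp add: bernoulli_gf_times mult.assoc)
  finally show ?thesis
    using fps_exp_minus_1_nonzero[OF assms] by simp
qed

lemma fact_bernoulli_nth:
  assumes "c \<noteq> 0"
  shows "fact k * fps_nth (bernoulli_gf c) k = c powi (int k - 1) * bernoulli k"
proof -
  have "c ^ k * fps_nth (bernoulli_gf 1) k = c * fps_nth (bernoulli_gf c) k"
    using arg_cong[OF bernoulli_gf_compose_linear[OF assms], of "\<lambda>f. fps_nth f k"] by simp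
  with assms show ?thesis
    by (simp add: bernoulli_conv_bernoulli_gf power_int_diff field_simps)
qed

lemma fact_bphi_nth:
  assumes "c \<noteq> 0"
  shows "fact k * fps_nth ((fps_exp (c * x) - 1) * bernoulli_gf c) k = c powi (int k - 1) * bphi k x"
proof -
  have "((fps_exp x - 1) * bernoulli_gf 1) oo (fps_const c * fps_X)
      = fps_const c * ((fps_exp (c * x) - 1) * bernoulli_gf c)"
    using assms by (simp add: fps_compose_mult_distrib fps_compose_sub_distrib
        bernoulli_gf_compose_linear mult.left_commute)
  then have "c ^ k * fps_nth ((fps_exp x - 1) * bernoulli_gf 1) k
      = c * fps_nth ((fps_exp (c * x) - 1) * bernoulli_gf c) k"
    by (metis fps_nth_compose_linear fps_mult_left_const_nth)
  moreover have "fact k * Q = c powi (int k - 1) * (fact k * P)" if "c ^ k * P = c * Q" for P Q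
    using that assms by (simp add: power_int_diff field_simps)
  ultimately show ?thesis
    by (simp only: bphi_conv_bernoulli_gf)
qed

lemma fact_fps_mult_nth:
  fixes f g :: "'a::field_char_0 fps"
  shows "fact n * fps_nth (f * g) n
       = (\<Sum>j=0..n. of_nat (n choose j) * (fact j * fps_nth f j) * (fact (n - j) * fps_nth g (n - j)))"
  unfolding fps_mult_nth sum_distrib_left
proof (rule sum.cong)
  fix j assume "j \<in> {0..n}"
  then have "fact n = of_nat (n choose j) * fact j * (fact (n - j) :: 'a)"
    by (simp add: binomial_fact)
  then show "fact n * (fps_nth f j * fps_nth g (n - j))
      = of_nat (n choose j) * (fact j * fps_nth f j) * (fact (n - j) * fps_nth g (n - j))"
    by (simp add: ac_simps)
qed simp

lemma fact_fps_X_mult_nth: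
  fixes f :: "'a::field_char_0 fps"
  assumes "m \<ge> 1"
  shows "fact m * fps_nth (fps_X * f) m = of_nat m * (fact (m - 1) * fps_nth f (m - 1))"
  using assms by (cases m) simp_all

lemma ceiling_div_bounds:
  fixes s t :: nat
  assumes "s \<ge> 1" "t \<ge> 1"
  shows "((t + s - 1) div s - 1) * s < t" "t \<le> (t + s - 1) div s * s"
proof -
  define q where "q = (t + s - 1) div s"
  have "q * s + (t + s - 1) mod s = t + s - 1" "(t + s - 1) mod s < s"
    using assms by (simp_all add: q_def)
  then show "(q - 1) * s < t" "t \<le> q * s"
    unfolding diff_mult_distrib using assms by linarith+
qed

lemma ceiling_of_nat_divide:
  fixes n s :: nat
  assumes "s \<ge> 1"
  shows "\<lceil>real n / real s\<rceil> = int ((n + s - 1) div s)"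
proof (rule ceiling_unique)
  define q where "q = (n + s - 1) div s"
  have "q * s + (n + s - 1) mod s = n + s - 1" "(n + s - 1) mod s < s"
    using assms by (simp_all add: q_def)
  then have "real n \<le> real q * real s" "real q * real s < real n + real s"
    unfolding of_nat_mult[symmetric] of_nat_add[symmetric] of_nat_le_iff of_nat_less_iff by linarith+
  then show "real n / real s \<le> real_of_int (int q)" "real_of_int (int q) - 1 < real n / real s"
    using assms by (simp_all add: field_simps)
qed

lemma ceiling_div_step:
  fixes n s :: nat
  assumes "s \<ge> 1"
  shows "(n + s) div s = (if s dvd n then (n + s - 1) div s + 1 else (n + s - 1) div s)"
proof -
  have "n + s = Suc (n + s - 1)"
    using assms by simp
  then show ?thesis
    using div_Suc[of "n + s - 1" s] by (metis dvd_eq_mod_eq_0 mod_add_self2 Suc_eq_plus1)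
qed

lemma ceiling_div_dvd:
  fixes n s :: nat
  assumes "s \<ge> 1" "s dvd n"
  shows "s * ((n + s - 1) div s) = n"
proof -
  obtain k where "n = k * s"
    using assms(2) by (metis dvdE mult.commute)
  moreover have "(s - 1 + k * s) div s = k"
    using assms(1) by (simp only: div_mult_self1) simp
  ultimately show ?thesis
    using assms(1) by (simp add: add.commute)
qed

lemma sum_power_ceiling_div:
  fixes u v :: "'a::comm_ring_1" and s n :: nat
  assumes "s \<ge> 1"
  shows "(u - 1) * (v * u ^ s - 1) * (\<Sum>t\<le>n. v ^ ((t + s - 1) div s) * u ^ t)
       = (v ^ ((n + s - 1) div s) * u ^ (n + 1) - 1) * (v * u ^ s - 1)
         - u * (v - 1) * (v ^ ((n + s - 1) div s) * u ^ (s * ((n + s - 1) div s)) - 1)"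
proof (induction n)
  case 0
  then show ?case
    using assms by simp
next
  case (Suc n)
  define q where "q = (n + s - 1) div s"
  have sum_Suc: "(\<Sum>t\<le>Suc n. v ^ ((t + s - 1) div s) * u ^ t)
      = (\<Sum>t\<le>n. v ^ ((t + s - 1) div s) * u ^ t) + v ^ ((n + s) div s) * u ^ Suc n"
    by simp
  show ?case
  proof (cases "s dvd n")
    case True
    then have "(n + s) div s = q + 1" "n = s * q"
      using ceiling_div_step[OF assms, of n] ceiling_div_dvd[OF assms, of n] by (simp_all add: q_def)
    then show ?thesis
      unfolding sum_Suc distrib_left Suc.IH q_def[symmetric]
      by (simp add: algebra_simps power_add)
  next
    case False
    then have "(n + s) div s = q"
      using ceiling_div_step[OF assms, of n] by (simp add: q_def)
    then show ?thesis
      unfolding sum_Suc distrib_left Suc.IH q_def[symmetric]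
      by (simp add: algebra_simps)
  qed
qed

definition apery_set :: "nat set \<Rightarrow> nat \<Rightarrow> nat set" where
  "apery_set S a = {n \<in> S. n < a \<or> n - a \<notin> S}"

lemma shift_complement_Un_eq:
  assumes "\<And>n. n \<in> S \<Longrightarrow> n + a \<in> S"
  shows "(\<lambda>n. n + a) ` (- S) \<union> {..<a} = - S \<union> apery_set S a"
proof (intro equalityI subsetI)
  fix n assume "n \<in> (\<lambda>n. n + a) ` (- S) \<union> {..<a}"
  then consider (shift) m where "n = m + a" "m \<notin> S" | (small) "n < a" by auto
  then show "n \<in> - S \<union> apery_set S a"
    by cases (auto simp: apery_set_def)
next
  fix n assume n: "n \<in> - S \<union> apery_set S a"
  show "n \<in> (\<lambda>n. n + a) ` (- S) \<union> {..<a}"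
  proof (cases "n < a")
    case False
    then have "n = (n - a) + a" by simp
    moreover have "n - a \<notin> S"
      using n False assms[of "n - a"] unfolding apery_set_def by auto
    ultimately show ?thesis by blast
  qed simp
qed

lemma sum_shift_complement:
  fixes g :: "nat \<Rightarrow> 'b::comm_monoid_add"
  assumes "finite (- S)" "\<And>n. n \<in> S \<Longrightarrow> n + a \<in> S"
  shows "(\<Sum>n\<in>- S. g (n + a)) + (\<Sum>r<a. g r) = (\<Sum>n\<in>- S. g n) + (\<Sum>n\<in>apery_set S a. g n)"
proof -
  have fin: "finite (apery_set S a)"
    using shift_complement_Un_eq[OF assms(2)] assms(1)
    by (metis finite_Un finite_imageI finite_lessThan)
  have "(\<Sum>n\<in>- S. g (n + a)) + (\<Sum>r<a. g r) = sum g ((\<lambda>n. n + a) ` (- S) \<union> {..<a})"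
    using assms(1) by (subst sum.union_disjoint) (auto simp: sum.reindex)
  also have "\<dots> = sum g (- S \<union> apery_set S a)"
    by (simp only: shift_complement_Un_eq[OF assms(2)])
  also have "\<dots> = (\<Sum>n\<in>- S. g n) + (\<Sum>n\<in>apery_set S a. g n)"
    using assms(1) fin by (subst sum.union_disjoint) (auto simp: apery_set_def)
  finally show ?thesis .
qed

definition representable :: "nat \<Rightarrow> nat \<Rightarrow> nat \<Rightarrow> nat \<Rightarrow> nat \<Rightarrow> bool" where
  "representable a d h s n \<longleftrightarrow>
     (\<exists>x0 (x :: nat \<Rightarrow> nat). n = a * x0 + (\<Sum>i=1..s. (h * a + i * d) * x i))"

lemma NR_eq_complement: "NR a d h s = - {n. representable a d h s n}"
proof -
  have "representable a d h s 0"
    unfolding representable_def by (intro exI[of _ 0] exI[of _ "\<lambda>_. 0"]) simp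
  then show ?thesis
    unfolding NR_def representable_def by (auto intro!: Nat.gr0I)
qed

lemma representable_add_multiple:
  assumes "representable a d h s n"
  shows "representable a d h s (n + k * a)"
proof -
  obtain x0 x where "n = a * x0 + (\<Sum>i=1..s. (h * a + i * d) * x i)"
    using assms unfolding representable_def by blast
  then have "n + k * a = a * (x0 + k) + (\<Sum>i=1..s. (h * a + i * d) * x i)"
    by (simp add: algebra_simps)
  then show ?thesis
    unfolding representable_def by blast
qed

(* ceil(t/s) h a + t d: the least representable number congruent to t d modulo a *)
definition apery :: "nat \<Rightarrow> nat \<Rightarrow> nat \<Rightarrow> nat \<Rightarrow> nat \<Rightarrow> nat" where
  "apery a d h s t = (t + s - 1) div s * h * a + t * d"

lemma representable_apery:
  assumes "s \<ge> 1"
  shows "representable a d h s (apery a d h s t)"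
proof (cases "t = 0")
  case True
  with assms have "apery a d h s t = a * 0 + (\<Sum>i=1..s. (h * a + i * d) * 0)"
    by (simp add: apery_def)
  then show ?thesis
    unfolding representable_def by (intro exI)
next
  case False
  define q where "q = (t + s - 1) div s"
  define r where "r = t - (q - 1) * s"
  have "(q - 1) * s < t" "t \<le> q * s"
    using ceiling_div_bounds[OF assms, of t] False by (simp_all add: q_def)
  moreover from this(2) False have q: "q = (q - 1) + 1"
    by (cases q) auto
  ultimately have t: "t = (q - 1) * s + r" and r: "1 \<le> r" "r \<le> s"
    by (auto simp: r_def diff_mult_distrib)
  define x where "x i = (if i = s then q - 1 else 0) + (if i = r then 1 else 0)" for i
  have "(\<Sum>i=1..s. (h * a + i * d) * x i)
      = (\<Sum>i=1..s. if i = s then (h * a + i * d) * (q - 1) else 0)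
      + (\<Sum>i=1..s. if i = r then h * a + i * d else 0)"
    unfolding x_def by (subst sum.distrib[symmetric]) (auto intro: sum.cong)
  also have "\<dots> = (h * a + s * d) * (q - 1) + (h * a + r * d)"
    using assms r by simp
  also have "\<dots> = apery a d h s t"
  proof -
    obtain p where "q = p + 1" "t = p * s + r"
      using q t by blast
    then show ?thesis
      unfolding apery_def q_def[symmetric] by (simp add: algebra_simps)
  qed
  finally show ?thesis
    unfolding representable_def by (metis mult_0_right add_0)
qed

lemma representable_imp_apery_add_multiple:
  assumes "s \<ge> 1" "a \<ge> 1" "representable a d h s n"
  shows "\<exists>t<a. \<exists>k. n = apery a d h s t + k * a"
proof -
  obtain x0 x where n: "n = a * x0 + (\<Sum>i=1..s. (h * a + i * d) * x i)"
    using assms(3) unfolding representable_def by blast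
  define K where "K = (\<Sum>i=1..s. x i)"
  define T where "T = (\<Sum>i=1..s. i * x i)"
  define t where "t = T mod a"
  define q where "q = (t + s - 1) div s"
  have "t \<le> T"
    unfolding t_def by (rule mod_less_eq_dividend)
  also have "T \<le> s * K"
    unfolding T_def K_def sum_distrib_left by (intro sum_mono) simp
  finally have "q \<le> (s - 1 + K * s) div s"
    unfolding q_def by (intro div_le_mono) (simp add: mult.commute)
  also have "\<dots> = K"
    using assms(1) by (simp only: div_mult_self1) simp
  finally obtain K' where K': "K = q + K'"
    using le_Suc_ex by blast
  have "n = a * x0 + h * a * K + d * (T div a * a + t)"
    unfolding n K_def T_def t_def by (simp add: sum.distrib sum_distrib_left algebra_simps)
  also have "\<dots> = apery a d h s t + (x0 + h * K' + T div a * d) * a"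
    unfolding apery_def q_def[symmetric] K' by (simp add: algebra_simps)
  finally have "n = apery a d h s t + (x0 + h * K' + T div a * d) * a" .
  moreover have "t < a"
    using assms(2) by (simp add: t_def)
  ultimately show ?thesis
    by blast
qed

lemma cong_apery: "[apery a d h s t = t * d] (mod a)"
  by (simp add: apery_def cong_def)

lemma apery_cong_imp_eq:
  assumes "coprime a d" "t < a" "t' < a" "[apery a d h s t = apery a d h s t'] (mod a)"
  shows "t = t'"
proof -
  have "[t * d = t' * d] (mod a)"
    using assms(4) cong_apery by (metis cong_sym cong_trans)
  then have "[t = t'] (mod a)"
    using assms(1) by (simp add: cong_mult_rcancel_nat coprime_commute)
  then show ?thesis
    using assms(2,3) by (rule cong_less_modulus_unique_nat)
qed

lemma inj_on_apery: "coprime a d \<Longrightarrow> inj_on (apery a d h s) {..<a}"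
  by (auto intro!: inj_onI apery_cong_imp_eq[where h = h and s = s])

lemma apery_eq_apery_add_multiple_imp:
  assumes "coprime a d" "t < a" "t' < a" "apery a d h s t = apery a d h s t' + k * a"
  shows "t = t' \<and> k = 0"
proof -
  have "t = t'"
    using assms by (intro apery_cong_imp_eq[where h = h and s = s]) (auto simp: cong_def)
  with assms show ?thesis
    by simp
qed

lemma apery_set_representable:
  assumes "s \<ge> 1" "a \<ge> 1" "coprime a d"
  shows "apery_set {n. representable a d h s n} a = apery a d h s ` {..<a}"
proof (intro equalityI subsetI)
  fix n assume n: "n \<in> apery_set {n. representable a d h s n} a"
  then have "representable a d h s n"
    by (simp add: apery_set_def)
  then obtain t k where t: "t < a" and n_eq: "n = apery a d h s t + k * a"
    using representable_imp_apery_add_multiple[OF assms(1,2)] by blast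
  have "k = 0"
  proof (rule ccontr)
    assume "k \<noteq> 0"
    then obtain k' where "k = k' + 1"
      using not0_implies_Suc by auto
    then have "a \<le> n" "n - a = apery a d h s t + k' * a"
      using n_eq by simp_all
    then show False
      using n representable_apery[OF assms(1)] representable_add_multiple
      by (auto simp: apery_set_def)
  qed
  with t n_eq show "n \<in> apery a d h s ` {..<a}"
    by simp
next
  fix n assume "n \<in> apery a d h s ` {..<a}"
  then obtain t where t: "t < a" and n: "n = apery a d h s t"
    by blast
  have "\<not> representable a d h s (n - a)" if "a \<le> n"
  proof
    assume "representable a d h s (n - a)"
    then obtain t' k where "t' < a" "n - a = apery a d h s t' + k * a"
      using representable_imp_apery_add_multiple[OF assms(1,2)] by blast
    then have "apery a d h s t = apery a d h s t' + (k + 1) * a"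
      using that n by simp
    from apery_eq_apery_add_multiple_imp[OF assms(3) t \<open>t' < a\<close> this] show False
      by simp
  qed
  then show "n \<in> apery_set {n. representable a d h s n} a"
    using representable_apery[OF assms(1)] n by (auto simp: apery_set_def)
qed

lemma finite_not_representable:
  assumes "s \<ge> 1" "a \<ge> 1" "coprime a d"
  shows "finite (- {n. representable a d h s n})"
proof (rule finite_subset)
  obtain y where y: "[d * y = 1] (mod a)"
    using cong_solve_coprime_nat[of d a] assms(3) by (auto simp: coprime_commute)
  show "- {n. representable a d h s n} \<subseteq> (\<Union>t<a. {..<apery a d h s t})"
  proof
    fix n assume n: "n \<in> - {n. representable a d h s n}"
    define t where "t = n * y mod a"
    have "[apery a d h s t = n * (d * y)] (mod a)"
      using cong_apery[of a d h s t] unfolding t_def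
      by (metis cong_def cong_trans mod_mult_left_eq mult.commute mult.left_commute)
    also have "[n * (d * y) = n * 1] (mod a)"
      using y by (rule cong_scalar_left)
    finally have cong: "[n = apery a d h s t] (mod a)"
      by (simp add: cong_sym)
    have "n < apery a d h s t"
    proof (rule ccontr)
      assume "\<not> n < apery a d h s t"
      then obtain k where "n = k * a + apery a d h s t"
        using cong cong_le_nat by (meson not_less)
      then show False
        using n representable_add_multiple[OF representable_apery[OF assms(1)]]
        by (simp add: add.commute)
    qed
    moreover have "t < a"
      using assms(2) by (simp add: t_def)
    ultimately show "n \<in> (\<Union>t<a. {..<apery a d h s t})"
      by blast
  qed
  show "finite (\<Union>t<a. {..<apery a d h s t})"
    by simp
qed

lemma fps_exp_minus_1_times_NR:
  assumes "s \<ge> 1" "a \<ge> 1" "coprime a d"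
  shows "(fps_exp (real a) - 1) * (\<Sum>n\<in>NR a d h s. fps_exp (real n))
       = (\<Sum>t<a. fps_exp (real (apery a d h s t))) - (\<Sum>r<a. fps_exp (real r))"
proof -
  let ?S = "{n. representable a d h s n}"
  have "(\<Sum>n\<in>- ?S. fps_exp (real (n + a))) + (\<Sum>r<a. fps_exp (real r))
      = (\<Sum>n\<in>- ?S. fps_exp (real n)) + (\<Sum>n\<in>apery_set ?S a. fps_exp (real n))"
    using finite_not_representable[OF assms] representable_add_multiple[where k = 1]
    by (intro sum_shift_complement) auto
  also have "(\<Sum>n\<in>apery_set ?S a. fps_exp (real n)) = (\<Sum>t<a. fps_exp (real (apery a d h s t)))"
    using inj_on_apery[OF assms(3)] by (simp add: apery_set_representable[OF assms] sum.reindex)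
  finally have "fps_exp (real a) * (\<Sum>n\<in>NR a d h s. fps_exp (real n)) + (\<Sum>r<a. fps_exp (real r))
      = (\<Sum>n\<in>NR a d h s. fps_exp (real n)) + (\<Sum>t<a. fps_exp (real (apery a d h s t)))"
    by (simp add: NR_eq_complement fps_exp_add_mult sum_distrib_left mult.commute)
  then show ?thesis
    by (simp add: algebra_simps)
qed

lemma sum_fps_exp_apery:
  fixes a d h s :: nat
  assumes "s \<ge> 1" "a \<ge> 1"
  defines "q \<equiv> (a - 1 + s - 1) div s"
  defines "u \<equiv> fps_exp (real d)" and "v \<equiv> fps_exp (real a * real h)"
  defines "L \<equiv> real h * real a + real s * real d"
  shows "(u - 1) * (fps_exp L - 1) * (\<Sum>t<a. fps_exp (real (apery a d h s t)))
       = (fps_exp (real a * (real h * real q + real d)) - 1) * (fps_exp L - 1)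
         - u * (v - 1) * (fps_exp (L * real q) - 1)"
proof -
  have "fps_exp (real (apery a d h s t)) = v ^ ((t + s - 1) div s) * u ^ t" for t
    by (simp add: apery_def u_def v_def fps_exp_add_mult fps_exp_power_mult algebra_simps)
  moreover have "{..<a} = {..a - 1}"
    using assms(2) by auto
  moreover have "fps_exp L = v * u ^ s"
    unfolding u_def v_def L_def by (simp add: fps_exp_add_mult[symmetric] fps_exp_power_mult algebra_simps)
  moreover have "fps_exp (real a * (real h * real q + real d)) = v ^ q * u ^ (a - 1 + 1)"
    unfolding u_def v_def using assms(2)
    by (simp add: fps_exp_add_mult[symmetric] fps_exp_power_mult algebra_simps)
  moreover have "fps_exp (L * real q) = v ^ q * u ^ (s * q)"
    unfolding u_def v_def L_def by (simp add: fps_exp_add_mult[symmetric] fps_exp_power_mult algebra_simps)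
  ultimately show ?thesis
    using sum_power_ceiling_div[OF assms(1), of u v "a - 1"] by (simp add: q_def)
qed

lemma sum_fps_exp_times_fps_exp_minus_1:
  "(\<Sum>r<n. fps_exp (real r)) * (fps_exp 1 - 1) = fps_exp (real n) - (1 :: real fps)"
  using power_diff_1_eq[of "fps_exp 1 :: real fps" n]
  by (simp add: fps_exp_power_mult mult.commute)

lemma fps_X_power_3_times_sum_fps_exp:
  "fps_X ^ 3 * (\<Sum>r<n. fps_exp (real r)) = (fps_exp (real n) - 1) * (fps_X ^ 2 * bernoulli_gf 1)"
proof -
  have "(fps_exp 1 - 1) * (fps_X ^ 3 * (\<Sum>r<n. fps_exp (real r)))
      = fps_X ^ 2 * fps_X * ((\<Sum>r<n. fps_exp (real r)) * (fps_exp 1 - 1))"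
    by (simp only: power3_eq_cube power2_eq_square ac_simps)
  also have "\<dots> = fps_X ^ 2 * fps_X * (fps_exp (real n) - 1)"
    by (simp only: sum_fps_exp_times_fps_exp_minus_1)
  also have "\<dots> = (fps_exp 1 - 1) * ((fps_exp (real n) - 1) * (fps_X ^ 2 * bernoulli_gf 1))"
    by (simp flip: bernoulli_gf_times[of 1] add: ac_simps)
  finally show ?thesis
    using fps_exp_minus_1_nonzero[of 1] by simp
qed

lemma fps_X_power_3_times_sum_fps_exp_apery:
  fixes a d h s :: nat
  assumes "s \<ge> 1" "a \<ge> 1" "d \<ge> 1"
  defines "q \<equiv> (a - 1 + s - 1) div s"
  defines "L \<equiv> real h * real a + real s * real d"
  shows "fps_X ^ 3 * (\<Sum>t<a. fps_exp (real (apery a d h s t)))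
       = (fps_exp (real a) - 1)
         * (fps_X * ((fps_exp (real a * (real h * real q + real d)) - 1) * bernoulli_gf a * bernoulli_gf d)
            + (fps_exp (L * real q) - 1) * bernoulli_gf L * bernoulli_gf (- real d)
                * ((fps_exp (real a * real h) - 1) * bernoulli_gf a))"
    (is "?X ^ 3 * ?W = (?Ea - 1) * ?T")
proof -
  define u where "u = fps_exp (real d)"
  define v where "v = fps_exp (real a * real h)"
  define EL where "EL = fps_exp L"
  define Ey where "Ey = fps_exp (real a * (real h * real q + real d))"
  define ELq where "ELq = fps_exp (L * real q)"
  have "L > 0"
    unfolding L_def using assms(1,3) by (intro add_nonneg_pos) simp_all
  then have nonzero: "u - 1 \<noteq> 0" "EL - 1 \<noteq> 0"
    using assms(3) by (simp_all add: u_def EL_def fps_exp_minus_1_nonzero)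
  have B: "bernoulli_gf a * (?Ea - 1) = ?X" "bernoulli_gf d * (u - 1) = ?X"
      "bernoulli_gf L * (EL - 1) = ?X" "bernoulli_gf (- real d) * (u - 1) = - (u * ?X)"
    using assms(2,3) \<open>L > 0\<close>
    by (simp_all add: u_def EL_def bernoulli_gf_times bernoulli_gf_uminus_times)
  have W: "(u - 1) * (EL - 1) * ?W = (Ey - 1) * (EL - 1) - u * (v - 1) * (ELq - 1)"
    unfolding u_def EL_def Ey_def v_def ELq_def q_def L_def
    using assms(1,2) by (rule sum_fps_exp_apery)
  have "(u - 1) * (EL - 1) * ((?Ea - 1) * ?T)
      = ?X * (Ey - 1) * (bernoulli_gf a * (?Ea - 1)) * (bernoulli_gf d * (u - 1)) * (EL - 1)
        + (ELq - 1) * (bernoulli_gf L * (EL - 1)) * (bernoulli_gf (- real d) * (u - 1)) * (v - 1)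
          * (bernoulli_gf a * (?Ea - 1))"
    unfolding Ey_def[symmetric] ELq_def[symmetric] v_def[symmetric] by (simp add: algebra_simps)
  also have "\<dots> = ?X ^ 3 * ((Ey - 1) * (EL - 1) - u * (v - 1) * (ELq - 1))"
    unfolding B by (simp add: algebra_simps power3_eq_cube)
  also have "\<dots> = ?X ^ 3 * ((u - 1) * (EL - 1) * ?W)"
    by (simp only: W)
  also have "\<dots> = (u - 1) * (EL - 1) * (?X ^ 3 * ?W)"
    by (simp only: ac_simps)
  finally show ?thesis
    using nonzero by simp
qed

lemma fps_X_power_3_times_NR:
  fixes a d h s :: nat
  assumes "s \<ge> 1" "a \<ge> 1" "d \<ge> 1" "coprime a d"
  defines "q \<equiv> (a - 1 + s - 1) div s"
  defines "L \<equiv> real h * real a + real s * real d"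
  shows "fps_X ^ 3 * (\<Sum>n\<in>NR a d h s. fps_exp (real n))
       = fps_X * ((fps_exp (real a * (real h * real q + real d)) - 1) * bernoulli_gf a * bernoulli_gf d)
         + (fps_exp (L * real q) - 1) * bernoulli_gf L * bernoulli_gf (- real d)
             * ((fps_exp (real a * real h) - 1) * bernoulli_gf a)
         - fps_X ^ 2 * bernoulli_gf 1"
    (is "?X ^ 3 * ?N = ?T - ?X ^ 2 * bernoulli_gf 1")
proof -
  have "(fps_exp (real a) - 1) * (?X ^ 3 * ?N)
      = ?X ^ 3 * (\<Sum>t<a. fps_exp (real (apery a d h s t))) - ?X ^ 3 * (\<Sum>r<a. fps_exp (real r))"
    by (simp only: fps_exp_minus_1_times_NR[OF assms(1,2,4)] mult.left_commute[of _ "?X ^ 3"]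
        right_diff_distrib)
  also have "\<dots> = (fps_exp (real a) - 1) * (?T - ?X ^ 2 * bernoulli_gf 1)"
    unfolding fps_X_power_3_times_sum_fps_exp fps_X_power_3_times_sum_fps_exp_apery[OF assms(1-3)]
      q_def L_def by (simp only: right_diff_distrib)
  finally show ?thesis
    using fps_exp_minus_1_nonzero[of "real a"] assms(2) by simp
qed

lemma fact_fps_X_power_3_NR_nth:
  assumes "m \<ge> 3"
  shows "fact m * fps_nth (fps_X ^ 3 * (\<Sum>n\<in>NR a d h s. fps_exp (real n))) m
       = real m * (real m - 1) * (real m - 2) * Spow a d h s (m - 3)"
proof -
  obtain k where m: "m = k + 3"
    using assms by (metis add.commute le_Suc_ex)
  have nth: "fps_nth (fps_X ^ 3 * (\<Sum>n\<in>NR a d h s. fps_exp (real n))) m = Spow a d h s k / fact k"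
    by (simp add: m fps_X_power_mult_nth fps_sum_nth Spow_def sum_divide_distrib)
  have "(fact m :: real) = real m * (real m - 1) * (real m - 2) * fact k"
    by (simp add: m numeral_3_eq_3 algebra_simps)
  then show ?thesis
    unfolding nth by (simp add: m)
qed

lemma fact_fps_X_power_2_bernoulli_nth:
  assumes "m \<ge> 2"
  shows "fact m * fps_nth (fps_X ^ 2 * bernoulli_gf 1) m = real m * (real m - 1) * bernoulli (m - 2)"
proof -
  obtain k where m: "m = k + 2"
    using assms by (metis add.commute le_Suc_ex)
  have "fps_nth (fps_X ^ 2 * bernoulli_gf 1) m = bernoulli k / fact k"
    by (simp add: m fps_X_power_mult_nth bernoulli_conv_bernoulli_gf)
  moreover have "(fact m :: real) = real m * (real m - 1) * fact k"
    by (simp add: m numeral_2_eq_2 algebra_simps)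
  ultimately show ?thesis
    by (simp add: m)
qed

lemma fact_fps_X_bphi_bernoulli_nth:
  assumes "m \<ge> 1" "a \<noteq> 0" "d \<noteq> 0"
  shows "fact m * fps_nth (fps_X * ((fps_exp (a * y) - 1) * bernoulli_gf a * bernoulli_gf d)) m
       = real m * (\<Sum>j=0..m-1. real (m - 1 choose j) * (d powi (int m - int j - 2))
           * bernoulli (m - j - 1) * (a powi (int j - 1)) * bphi j y)"
proof -
  let ?F = "(fps_exp (a * y) - 1) * bernoulli_gf a"
  have "fact (m - 1) * fps_nth (?F * bernoulli_gf d) (m - 1)
      = (\<Sum>j=0..m-1. real (m - 1 choose j) * (fact j * fps_nth ?F j)
           * (fact (m - 1 - j) * fps_nth (bernoulli_gf d) (m - 1 - j)))"
    by (rule fact_fps_mult_nth)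
  also have "\<dots> = (\<Sum>j=0..m-1. real (m - 1 choose j) * (d powi (int m - int j - 2))
           * bernoulli (m - j - 1) * (a powi (int j - 1)) * bphi j y)"
  proof (rule sum.cong[OF refl])
    fix j assume "j \<in> {0..m-1}"
    then have exponents: "int m - int j - 2 = int (m - 1 - j) - 1" "m - j - 1 = m - 1 - j"
      using assms(1) by auto
    then show "real (m - 1 choose j) * (fact j * fps_nth ?F j)
          * (fact (m - 1 - j) * fps_nth (bernoulli_gf d) (m - 1 - j))
        = real (m - 1 choose j) * (d powi (int m - int j - 2)) * bernoulli (m - j - 1)
          * (a powi (int j - 1)) * bphi j y"
      unfolding fact_bphi_nth[OF assms(2)] fact_bernoulli_nth[OF assms(3)] exponents
      by (simp only: ac_simps)
  qed
  finally show ?thesis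
    by (simp only: fact_fps_X_mult_nth[OF assms(1)])
qed

lemma fact_bphi_bernoulli_bphi_nth:
  assumes "a \<noteq> 0" "d \<noteq> 0" "l \<noteq> 0"
  shows "fact m * fps_nth ((fps_exp (l * x) - 1) * bernoulli_gf l * bernoulli_gf d
           * ((fps_exp (a * y) - 1) * bernoulli_gf a)) m
       = (\<Sum>j=0..m. \<Sum>i=0..j. real (m choose j) * real (j choose i)
           * (a powi (int m - int j - 1)) * bphi (m - j) y
           * (d powi (int j - int i - 1)) * (l powi (int i - 1))
           * bernoulli (j - i) * bphi i x)"
proof -
  let ?F = "(fps_exp (l * x) - 1) * bernoulli_gf l" and ?G = "(fps_exp (a * y) - 1) * bernoulli_gf a"
  have inner: "fact j * fps_nth (?F * bernoulli_gf d) j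
      = (\<Sum>i=0..j. real (j choose i) * (l powi (int i - 1) * bphi i x)
           * (d powi (int j - int i - 1) * bernoulli (j - i)))" for j
  proof -
    have "fact j * fps_nth (?F * bernoulli_gf d) j
        = (\<Sum>i=0..j. real (j choose i) * (fact i * fps_nth ?F i)
             * (fact (j - i) * fps_nth (bernoulli_gf d) (j - i)))"
      by (rule fact_fps_mult_nth)
    also have "\<dots> = (\<Sum>i=0..j. real (j choose i) * (l powi (int i - 1) * bphi i x)
           * (d powi (int j - int i - 1) * bernoulli (j - i)))"
    proof (rule sum.cong[OF refl])
      fix i assume "i \<in> {0..j}"
      then have exponent: "int j - int i - 1 = int (j - i) - 1"
        by auto
      show "real (j choose i) * (fact i * fps_nth ?F i) * (fact (j - i) * fps_nth (bernoulli_gf d) (j - i))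
          = real (j choose i) * (l powi (int i - 1) * bphi i x)
            * (d powi (int j - int i - 1) * bernoulli (j - i))"
        unfolding fact_bphi_nth[OF assms(3)] fact_bernoulli_nth[OF assms(2)] exponent ..
    qed
    finally show ?thesis .
  qed
  have "fact m * fps_nth (?F * bernoulli_gf d * ?G) m
      = (\<Sum>j=0..m. real (m choose j) * (fact j * fps_nth (?F * bernoulli_gf d) j)
           * (fact (m - j) * fps_nth ?G (m - j)))"
    by (rule fact_fps_mult_nth)
  also have "\<dots> = (\<Sum>j=0..m. \<Sum>i=0..j. real (m choose j) * real (j choose i)
           * (a powi (int m - int j - 1)) * bphi (m - j) y
           * (d powi (int j - int i - 1)) * (l powi (int i - 1))
           * bernoulli (j - i) * bphi i x)"
  proof (rule sum.cong[OF refl])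
    fix j assume "j \<in> {0..m}"
    then have exponent: "int m - int j - 1 = int (m - j) - 1"
      by auto
    show "real (m choose j) * (fact j * fps_nth (?F * bernoulli_gf d) j) * (fact (m - j) * fps_nth ?G (m - j))
        = (\<Sum>i=0..j. real (m choose j) * real (j choose i)
           * (a powi (int m - int j - 1)) * bphi (m - j) y
           * (d powi (int j - int i - 1)) * (l powi (int i - 1))
           * bernoulli (j - i) * bphi i x)"
      unfolding inner fact_bphi_nth[OF assms(1)] exponent sum_distrib_left sum_distrib_right
      by (rule sum.cong[OF refl]) (simp only: ac_simps)
  qed
  finally show ?thesis .
qed

theorem mainTheorem8:
  fixes a d h s m :: nat
  assumes "a \<ge> 2" "d \<ge> 1" "h \<ge> 1" "gcd a d = 1" "1 \<le> s" "s < a" "m \<ge> 3"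
  defines "c \<equiv> real_of_int \<lceil>real (a - 1) / real s\<rceil>"
  shows "real m * (real m - 1) * (real m - 2) * Spow a d h s (m - 3) =
      real m * (\<Sum>j=0..m-1. real (m - 1 choose j) * (real d powi (int m - int j - 2))
          * bernoulli (m - j - 1) * (real a powi (int j - 1))
          * bphi j (real h * c + real d))
    + (\<Sum>j=0..m. \<Sum>i=0..j. real (m choose j) * real (j choose i)
          * (real a powi (int m - int j - 1)) * bphi (m - j) (real h)
          * ((- real d) powi (int j - int i - 1))
          * ((real h * real a + real s * real d) powi (int i - 1))
          * bernoulli (j - i) * bphi i c)
    - real m * (real m - 1) * bernoulli (m - 2)"
proof -
  define L where "L = real h * real a + real s * real d"
  have c: "c = real ((a - 1 + s - 1) div s)"
    using ceiling_of_nat_divide[OF assms(5)] by (simp add: c_def)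
  have "L > 0"
    unfolding L_def using assms(2,5) by (intro add_nonneg_pos) simp_all
  then have nonzero: "real a \<noteq> 0" "real d \<noteq> 0" "- real d \<noteq> 0" "L \<noteq> 0"
    using assms(1,2) by simp_all
  have "a \<ge> 1" "coprime a d"
    using assms(1,4) by (simp_all add: coprime_iff_gcd_eq_1)
  from fps_X_power_3_times_NR[OF assms(5) this(1) assms(2) this(2), of h]
  have identity: "fact m * fps_nth (fps_X ^ 3 * (\<Sum>n\<in>NR a d h s. fps_exp (real n))) m
      = fact m * fps_nth (fps_X * ((fps_exp (real a * (real h * c + real d)) - 1)
            * bernoulli_gf a * bernoulli_gf d)) m
        + fact m * fps_nth ((fps_exp (L * c) - 1) * bernoulli_gf L * bernoulli_gf (- real d)
            * ((fps_exp (real a * real h) - 1) * bernoulli_gf a)) m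
        - fact m * fps_nth (fps_X ^ 2 * bernoulli_gf 1) m"
    unfolding c[symmetric] L_def[symmetric] by (simp only: fps_add_nth fps_sub_nth ring_distribs)
  have m: "m \<ge> 1" "m \<ge> 2"
    using assms(7) by simp_all
  from identity show ?thesis
    unfolding L_def[symmetric] fact_fps_X_power_3_NR_nth[OF assms(7)]
      fact_fps_X_bphi_bernoulli_nth[OF m(1) nonzero(1,2)]
      fact_bphi_bernoulli_bphi_nth[OF nonzero(1,3,4)]
      fact_fps_X_power_2_bernoulli_nth[OF m(2)] .
qed

end
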